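(* A finite simple graph $G$ is pseudo-Gorenstein$^{*}$ if and only if $P_G(-1)=(-1)^{\alpha(G)}$.
   Context: Let $G$ be a finite simple graph on vertex set $[N]$, $K$ a field, $S=K[x_1,\dots,x_N]$, and $I(G)\subset S$ the edge ideal generated by $x_ix_j$ for $\{i,j\}\in E(G)$. Let $\alpha(G)$ be the independence number (which equals $\dim S/I(G)$). The Hilbert series of $S/I(G)$ is written uniquely as $(h_0+h_1t+\dots+h_st^s)/(1-t)^{\alpha(G)}$ with $h_s\neq 0$; the numerator $h_G(t)$ is the $h$-polynomial. The $\mathfrak a$-invariant is $\mathfrak a(G)=\deg h_G(t)-\alpha(G)$. $G$ is called pseudo-Gorenstein$^{*}$ if $h_s=1$ and $\mathfrak a(G)=0$. The independence polynomial is $P_G(x)=\sum_i g_ix^i$, where $g_i$ is the number of independent sets of $G$ of size $i$. *)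

theory Defs
  imports "HOL-Computational_Algebra.Polynomial_FPS"
begin

definition simple_graph :: "nat \<Rightarrow> nat set set \<Rightarrow> bool" where
  "simple_graph N E \<longleftrightarrow> (\<forall>e\<in>E. e \<subseteq> {1..N} \<and> card e = 2)"

definition independent :: "nat \<Rightarrow> nat set set \<Rightarrow> nat set \<Rightarrow> bool" where
  "independent N E S \<longleftrightarrow> S \<subseteq> {1..N} \<and> (\<forall>e\<in>E. \<not> e \<subseteq> S)"

definition indep_number :: "nat \<Rightarrow> nat set set \<Rightarrow> nat" where
  "indep_number N E = Max (card ` {S. independent N E S})"

definition indep_poly :: "nat \<Rightarrow> nat set set \<Rightarrow> int poly" where
  "indep_poly N E = (\<Sum>i\<le>N. monom (int (card {S. independent N E S \<and> card S = i})) i)"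

text \<open>Monomials of S = K[x_1..x_N] are exponent vectors a (zero outside {1..N}).
  The monomial x^a lies in the monomial ideal I(G) iff some generator x_i x_j
  (for an edge {i,j}) divides it, i.e. a_i >= 1 and a_j >= 1.
  Since the monomials outside a monomial ideal form a K-basis of the quotient,
  dim_K (S/I(G))_d is the number of degree-d monomials not in I(G).\<close>
definition monomials_deg :: "nat \<Rightarrow> nat \<Rightarrow> (nat \<Rightarrow> nat) set" where
  "monomials_deg N d = {a. (\<forall>i. i \<notin> {1..N} \<longrightarrow> a i = 0) \<and> (\<Sum>i\<in>{1..N}. a i) = d}"

definition in_edge_ideal :: "nat set set \<Rightarrow> (nat \<Rightarrow> nat) \<Rightarrow> bool" where
  "in_edge_ideal E a \<longleftrightarrow> (\<exists>e\<in>E. \<forall>i\<in>e. 1 \<le> a i)"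

definition hilbert_fun :: "nat \<Rightarrow> nat set set \<Rightarrow> nat \<Rightarrow> nat" where
  "hilbert_fun N E d = card {a \<in> monomials_deg N d. \<not> in_edge_ideal E a}"

definition hilbert_series :: "nat \<Rightarrow> nat set set \<Rightarrow> int fps" where
  "hilbert_series N E = Abs_fps (\<lambda>d. int (hilbert_fun N E d))"

definition h_poly :: "nat \<Rightarrow> nat set set \<Rightarrow> int poly" where
  "h_poly N E = (THE h. fps_of_poly h = hilbert_series N E * (1 - fps_X) ^ indep_number N E)"

definition a_invariant :: "nat \<Rightarrow> nat set set \<Rightarrow> int" where
  "a_invariant N E = int (degree (h_poly N E)) - int (indep_number N E)"

definition pseudo_gorenstein_star :: "nat \<Rightarrow> nat set set \<Rightarrow> bool" where
  "pseudo_gorenstein_star N E \<longleftrightarrow> lead_coeff (h_poly N E) = 1 \<and> a_invariant N E = 0"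

end

theory Submission imports Defs begin

text \<open>The monomials outside I(G) are partitioned by their supports, which are exactly the
  independent sets T of G. The monomials with support T have generating function
  t^|T| / (1 - t)^|T|, hence h(t) is the sum over T of t^|T| (1 - t)^(\<alpha> - |T|).
  This polynomial has degree at most \<alpha>, and its coefficient of t^\<alpha> is
  the sum over T of (-1)^(\<alpha> - |T|), which is (-1)^\<alpha> P(-1). So G is pseudo-Gorenstein* iff this
  coefficient is 1, i.e. iff P(-1) = (-1)^\<alpha>.\<close>

definition monomials_with_support :: "'a set \<Rightarrow> nat \<Rightarrow> ('a \<Rightarrow> nat) set" where
  "monomials_with_support S d =
     {a. (\<forall>i. i \<notin> S \<longrightarrow> a i = 0) \<and> (\<forall>i\<in>S. 1 \<le> a i) \<and> sum a S = d}"

lemma finite_monomials_with_support: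
  assumes "finite S"
  shows "finite (monomials_with_support S d)"
proof -
  have "monomials_with_support S d \<subseteq>
      {a. \<forall>x. (x \<in> S \<longrightarrow> a x \<in> {0..d}) \<and> (x \<notin> S \<longrightarrow> a x = 0)}"
    using assms by (auto simp: monomials_with_support_def intro: member_le_sum)
  then show ?thesis
    using finite_subset finite_set_of_finite_funs[OF assms, of "{0..d}" 0] by blast
qed

lemma monomials_with_support_empty:
  "monomials_with_support {} d = (if d = 0 then {\<lambda>_. 0} else {})"
  by (auto simp: monomials_with_support_def)

lemma support_eq_if_monomials_with_support:
  "a \<in> monomials_with_support S d \<Longrightarrow> S = {i. 1 \<le> a i}"
  by (force simp: monomials_with_support_def)

lemma monomials_with_support_insert_0:
  "finite S \<Longrightarrow> x \<notin> S \<Longrightarrow> monomials_with_support (insert x S) 0 = {}"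
  by (auto simp: monomials_with_support_def)

text \<open>Split according to whether the exponent of x is 1 (drop x from the support) or
  at least 2 (lower it by one).\<close>
lemma card_monomials_with_support_insert_Suc:
  assumes S: "finite S" and x: "x \<notin> S"
  shows "card (monomials_with_support (insert x S) (Suc d)) =
         card (monomials_with_support S d) + card (monomials_with_support (insert x S) d)"
proof -
  let ?M = monomials_with_support
  define P1 where "P1 = {a \<in> ?M (insert x S) (Suc d). a x = 1}"
  define P2 where "P2 = {a \<in> ?M (insert x S) (Suc d). a x \<noteq> 1}"
  have sum_upd: "sum (a(x := c)) S = sum a S" "(\<Sum>i\<in>S. if i = x then c else a i) = sum a S"
    for a :: "'a \<Rightarrow> nat" and c
    using x by (auto intro!: sum.cong)
  have "bij_betw (\<lambda>a. a(x := 0)) P1 (?M S d)"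
    by (rule bij_betw_byWitness[where f' = "\<lambda>a. a(x := 1)"])
      (use x S in \<open>auto simp: P1_def monomials_with_support_def sum_upd\<close>)
  then have card_P1: "card P1 = card (?M S d)"
    by (rule bij_betw_same_card)
  have "bij_betw (\<lambda>a. a(x := a x - 1)) P2 (?M (insert x S) d)"
  proof (rule bij_betw_byWitness[where f' = "\<lambda>a. a(x := a x + 1)"])
    show "(\<lambda>a. a(x := a x - 1)) ` P2 \<subseteq> ?M (insert x S) d"
    proof clarify
      fix a assume a: "a \<in> P2"
      then have "a x \<ge> 2" by (force simp: P2_def monomials_with_support_def)
      with a x S show "a(x := a x - 1) \<in> ?M (insert x S) d"
        by (auto simp: P2_def monomials_with_support_def sum_upd)
    qed
    show "(\<lambda>a. a(x := a x + 1)) ` ?M (insert x S) d \<subseteq> P2"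
      using x S by (auto simp: P2_def monomials_with_support_def sum_upd)
  qed (auto simp: P2_def monomials_with_support_def)
  then have card_P2: "card P2 = card (?M (insert x S) d)"
    by (rule bij_betw_same_card)
  have "?M (insert x S) (Suc d) = P1 \<union> P2" "P1 \<inter> P2 = {}"
    by (auto simp: P1_def P2_def)
  moreover have "finite (?M (insert x S) (Suc d))"
    using S by (simp add: finite_monomials_with_support)
  ultimately have "card (?M (insert x S) (Suc d)) = card P1 + card P2"
    by (metis card_Un_disjoint finite_Un)
  then show ?thesis
    by (simp add: card_P1 card_P2)
qed

lemma monomials_with_support_fps:
  assumes "finite S"
  shows "Abs_fps (\<lambda>d. int (card (monomials_with_support S d))) * (1 - fps_X) ^ card S =
         fps_X ^ card S"
  using assms
proof (induction S rule: finite_induct)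
  case empty
  have "Abs_fps (\<lambda>d. int (card (monomials_with_support {} d))) = 1"
    by (rule fps_ext) (simp add: monomials_with_support_empty)
  then show ?case by simp
next
  case (insert x S)
  let ?A = "Abs_fps (\<lambda>d. int (card (monomials_with_support (insert x S) d)))"
  let ?B = "Abs_fps (\<lambda>d. int (card (monomials_with_support S d)))"
  have step: "?A * (1 - fps_X) = fps_X * ?B"
  proof (rule fps_ext)
    fix n
    have "?A * (1 - fps_X) = ?A - fps_X * ?A"
      by (simp add: algebra_simps)
    then show "fps_nth (?A * (1 - fps_X)) n = fps_nth (fps_X * ?B) n"
      using insert
      by (cases n) (auto simp: monomials_with_support_insert_0
                               card_monomials_with_support_insert_Suc)
  qed
  have "?A * (1 - fps_X) ^ card (insert x S) = (?A * (1 - fps_X)) * (1 - fps_X) ^ card S"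
    using insert by (simp add: mult.assoc)
  also have "\<dots> = fps_X * (?B * (1 - fps_X) ^ card S)"
    by (simp add: step mult.assoc)
  finally show ?case
    using insert by simp
qed

lemma finite_independent_sets: "finite {S. independent N E S}"
  by (rule finite_subset[of _ "Pow {1..N}"]) (auto simp: independent_def)

lemma card_le_indep_number: "independent N E S \<Longrightarrow> card S \<le> indep_number N E"
  unfolding indep_number_def
  by (rule Max_ge) (auto intro: finite_imageI[OF finite_independent_sets])

lemma card_independent_le: "independent N E S \<Longrightarrow> card S \<le> N"
  unfolding independent_def using card_mono[of "{1..N}" S] by auto

lemma standard_monomials_eq_UN_support:
  "{a \<in> monomials_deg N d. \<not> in_edge_ideal E a} =
   (\<Union>S\<in>{S. independent N E S}. monomials_with_support S d)"
proof safe
  fix a assume a: "a \<in> monomials_deg N d" "\<not> in_edge_ideal E a"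
  let ?S = "{i. 1 \<le> a i}"
  have sub: "?S \<subseteq> {1..N}"
    using a(1) by (auto simp: monomials_deg_def)
  have "sum a {1..N} = sum a ?S"
    by (rule sum.mono_neutral_right) (use sub in auto)
  then have "a \<in> monomials_with_support ?S d"
    using a(1) by (auto simp: monomials_with_support_def monomials_deg_def)
  moreover have "independent N E ?S"
    using a(2) sub by (auto simp: independent_def in_edge_ideal_def)
  ultimately show "a \<in> (\<Union>S\<in>{S. independent N E S}. monomials_with_support S d)"
    by blast
next
  fix a S assume S: "independent N E S" and a: "a \<in> monomials_with_support S d"
  have sub: "S \<subseteq> {1..N}"
    using S by (auto simp: independent_def)
  have "sum a {1..N} = sum a S"
    by (rule sum.mono_neutral_right) (use sub a in \<open>auto simp: monomials_with_support_def\<close>)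
  then show "a \<in> monomials_deg N d"
    using a sub by (auto simp: monomials_with_support_def monomials_deg_def)
  assume "in_edge_ideal E a"
  then obtain e where "e \<in> E" "\<forall>i\<in>e. 1 \<le> a i"
    by (auto simp: in_edge_ideal_def)
  moreover have "e \<subseteq> S" if "\<forall>i\<in>e. 1 \<le> a i"
    using that support_eq_if_monomials_with_support[OF a] by blast
  ultimately show False
    using S by (auto simp: independent_def)
qed

lemma hilbert_fun_eq_sum_independent:
  "hilbert_fun N E d = (\<Sum>S\<in>{S. independent N E S}. card (monomials_with_support S d))"
  unfolding hilbert_fun_def standard_monomials_eq_UN_support
proof (rule card_UN_disjoint[OF finite_independent_sets])
  show "\<forall>S\<in>{S. independent N E S}. finite (monomials_with_support S d)"
    by (auto intro!: finite_monomials_with_support finite_subset[of _ "{1..N}"]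
             simp: independent_def)
  show "\<forall>S\<in>{S. independent N E S}. \<forall>T\<in>{S. independent N E S}.
      S \<noteq> T \<longrightarrow> monomials_with_support S d \<inter> monomials_with_support T d = {}"
    by (blast dest: support_eq_if_monomials_with_support)
qed

lemma fps_of_poly_one_minus_X: "fps_of_poly [:1::'a::comm_ring_1, -1:] = 1 - fps_X"
  by (simp add: fps_of_poly_pCons fps_const_neg)

lemma hilbert_series_eq_sum_independent:
  "hilbert_series N E =
   (\<Sum>S\<in>{S. independent N E S}. Abs_fps (\<lambda>d. int (card (monomials_with_support S d))))"
  by (rule fps_ext) (simp add: hilbert_series_def fps_sum_nth hilbert_fun_eq_sum_independent)

lemma h_poly_eq_sum_independent:
  "h_poly N E = (\<Sum>S\<in>{S. independent N E S}.
      monom 1 (card S) * [:1, -1:] ^ (indep_number N E - card S))"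
proof -
  let ?\<alpha> = "indep_number N E"
  let ?h = "\<Sum>S\<in>{S. independent N E S}. monom 1 (card S) * [:1, -1:] ^ (?\<alpha> - card S)"
  have "hilbert_series N E * (1 - fps_X) ^ ?\<alpha> = (\<Sum>S\<in>{S. independent N E S}.
      Abs_fps (\<lambda>d. int (card (monomials_with_support S d))) * (1 - fps_X) ^ ?\<alpha>)"
    by (simp add: hilbert_series_eq_sum_independent sum_distrib_right)
  also have "\<dots> = (\<Sum>S\<in>{S. independent N E S}. fps_X ^ card S * (1 - fps_X) ^ (?\<alpha> - card S))"
  proof (rule sum.cong[OF refl])
    fix S assume S: "S \<in> {S. independent N E S}"
    then have "finite S"
      by (auto simp: independent_def intro: finite_subset)
    moreover have "(1 - fps_X :: int fps) ^ ?\<alpha> = (1 - fps_X) ^ card S * (1 - fps_X) ^ (?\<alpha> - card S)"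
      using S card_le_indep_number by (simp flip: power_add)
    ultimately show "Abs_fps (\<lambda>d. int (card (monomials_with_support S d))) * (1 - fps_X) ^ ?\<alpha> =
        fps_X ^ card S * (1 - fps_X) ^ (?\<alpha> - card S)"
      by (simp flip: monomials_with_support_fps mult.assoc)
  qed
  also have "\<dots> = fps_of_poly ?h"
    by (simp add: fps_of_poly_sum fps_of_poly_mult fps_of_poly_power fps_of_poly_monom'
                  fps_of_poly_one_minus_X)
  finally have "fps_of_poly ?h = hilbert_series N E * (1 - fps_X) ^ ?\<alpha>"
    by (rule sym)
  then show ?thesis
    unfolding h_poly_def by (metis (mono_tags) the_equality fps_of_poly_eq_iff)
qed

lemma degree_h_poly_le: "degree (h_poly N E) \<le> indep_number N E"
  unfolding h_poly_eq_sum_independent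
proof (rule degree_sum_le[OF finite_independent_sets])
  fix S assume "S \<in> {S. independent N E S}"
  then have "card S \<le> indep_number N E"
    by (simp add: card_le_indep_number)
  moreover have "degree (monom (1::int) (card S) * [:1, -1:] ^ (indep_number N E - card S))
      \<le> card S + (indep_number N E - card S)"
    by (rule order.trans[OF degree_mult_le add_mono[OF degree_monom_le]])
      (use degree_power_le[of "[:1::int, -1:]"] in simp)
  ultimately show "degree (monom (1::int) (card S) * [:1, -1:] ^ (indep_number N E - card S))
      \<le> indep_number N E"
    by simp
qed

lemma coeff_one_minus_X_power_self: "coeff ([:1::'a::idom, -1:] ^ m) m = (-1) ^ m"
proof -
  have "degree ([:1::'a, -1:] ^ m) = m"
    by (subst degree_power_eq) auto
  then show ?thesis
    using lead_coeff_power[of "[:1::'a, -1:]" m] by simp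
qed

lemma coeff_h_poly_indep_number:
  "coeff (h_poly N E) (indep_number N E) =
   (\<Sum>S\<in>{S. independent N E S}. (-1) ^ (indep_number N E - card S))"
  unfolding h_poly_eq_sum_independent coeff_sum
  by (rule sum.cong[OF refl])
    (auto simp: coeff_monom_mult coeff_one_minus_X_power_self dest: card_le_indep_number)

lemma poly_indep_poly_minus_one:
  "poly (indep_poly N E) (-1) = (\<Sum>S\<in>{S. independent N E S}. (-1) ^ card S)"
proof -
  have "poly (indep_poly N E) (-1) =
      (\<Sum>i\<le>N. \<Sum>S\<in>{S \<in> {S. independent N E S}. card S = i}. (-1) ^ card S)"
    by (simp add: indep_poly_def poly_sum poly_monom)
  also have "\<dots> = (\<Sum>S\<in>{S. independent N E S}. (-1) ^ card S)"
    by (rule sum.group[OF finite_independent_sets finite_atMost])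
      (auto dest: card_independent_le)
  finally show ?thesis .
qed

lemma neg_one_power_mult_power_diff:
  assumes "k \<le> n"
  shows "(-1 :: 'a::comm_ring_1) ^ n * (-1) ^ (n - k) = (-1) ^ k"
proof -
  obtain m where "n = k + m"
    using assms le_iff_add by blast
  then show ?thesis
    by (simp add: power_add mult.assoc)
qed

lemma coeff_eq_1_iff_lead_coeff:
  fixes p :: "'a::zero_neq_one poly"
  assumes "degree p \<le> n"
  shows "coeff p n = 1 \<longleftrightarrow> lead_coeff p = 1 \<and> degree p = n"
proof
  assume "coeff p n = 1"
  then have "n \<le> degree p"
    by (intro le_degree) simp
  with assms \<open>coeff p n = 1\<close> show "lead_coeff p = 1 \<and> degree p = n"
    by simp
qed auto

theorem corollary1p4:
  fixes N :: nat and E :: "nat set set"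
  assumes "simple_graph N E"
  shows "pseudo_gorenstein_star N E \<longleftrightarrow>
         poly (indep_poly N E) (-1) = (-1) ^ indep_number N E"
proof -
  let ?\<alpha> = "indep_number N E"
  let ?c = "coeff (h_poly N E) ?\<alpha>"
  have "pseudo_gorenstein_star N E \<longleftrightarrow> ?c = 1"
    using coeff_eq_1_iff_lead_coeff[OF degree_h_poly_le]
    by (auto simp: pseudo_gorenstein_star_def a_invariant_def)
  moreover have "(-1) ^ ?\<alpha> * ?c = poly (indep_poly N E) (-1)"
    unfolding coeff_h_poly_indep_number poly_indep_poly_minus_one sum_distrib_left
    by (rule sum.cong) (auto simp: neg_one_power_mult_power_diff card_le_indep_number)
  moreover have "?c = 1 \<longleftrightarrow> (-1) ^ ?\<alpha> * ?c = (-1) ^ ?\<alpha>"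
    by simp
  ultimately show ?thesis
    by simp
qed

end
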